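(* Let $L_s, L_t\ge 0$ be integers and let $\beta=M/N$ with $M,N$ positive integers, $\gcd(M,N)=1$. Consider the multiset of positions $\{Nn+Mk: 0\le n\le L_s,\ 0\le k\le L_t\}$ (these are the positions $\tfrac{2d}{\lambda_b}(n+\beta k)$ under the normalization $\tfrac{2d}{\lambda_b}=N$), and let $\zeta_0<\zeta_1<\cdots<\zeta_{R_r-1}$ be its distinct values. Let $\mathbf{P}\in\{0,1\}^{(L_s+1)(L_t+1)\times R_r}$ be the matrix whose row with index $k(L_s+1)+n$ (rows indexed from $0$) has a single $1$, located in the column $c$ with $\zeta_c = Nn+Mk$, and zeros elsewhere. Then $$\mathrm{rank}(\mathbf{P})=R_r=\begin{cases} N(L_s+1)+M(L_t+1)-MN, & M<L_s+1 \text{ and } N<L_t+1,\\ (L_s+1)(L_t+1), & M\ge L_s+1 \text{ or } N\ge L_t+1.\end{cases}$$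
   Context: The matrix $\mathbf{P}$ arises in an airborne co-pulsing frequency diverse array radar: the Kronecker product of the coarray time steering vector $[e^{\mathrm{j}2\pi\beta\bar f k}]_{k=0}^{L_t}$ and receive steering vector $[e^{\mathrm{j}2\pi\bar f n}]_{n=0}^{L_s}$ equals $\mathbf{P}\mathbf{v}_{Rb}(\bar f)$, where $\mathbf{v}_{Rb}$ collects the exponentials at the distinct positions. Here $\beta = 2\nu_p T/d$ (platform velocity $\nu_p$, pulse repetition interval $T$, element spacing $d$), and the theorem is stated under the assumption $2d/\lambda_b=N$ with $\lambda_b$ the reference wavelength. *)

theory Defs
  imports "Jordan_Normal_Form.DL_Rank"
begin

definition positions :: "nat \<Rightarrow> nat \<Rightarrow> nat \<Rightarrow> nat \<Rightarrow> nat set" where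
  "positions M N Ls Lt = {N * n + M * k | n k. n \<le> Ls \<and> k \<le> Lt}"

definition zeta :: "nat \<Rightarrow> nat \<Rightarrow> nat \<Rightarrow> nat \<Rightarrow> nat \<Rightarrow> nat" where
  "zeta M N Ls Lt c = sorted_list_of_set (positions M N Ls Lt) ! c"

definition Rr :: "nat \<Rightarrow> nat \<Rightarrow> nat \<Rightarrow> nat \<Rightarrow> nat" where
  "Rr M N Ls Lt = card (positions M N Ls Lt)"

definition Pmat :: "nat \<Rightarrow> nat \<Rightarrow> nat \<Rightarrow> nat \<Rightarrow> real mat" where
  "Pmat M N Ls Lt = mat ((Ls + 1) * (Lt + 1)) (Rr M N Ls Lt)
     (\<lambda>(i, c). if zeta M N Ls Lt c = N * (i mod (Ls + 1)) + M * (i div (Ls + 1)) then 1 else 0)"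

end

theory Submission imports Defs begin

text \<open>
  Every row of P carries exactly one 1, and since \<open>zeta\<close> enumerates all positions, every column
  carries a 1 in some row; so each column owns a row in which it is the only nonzero entry, and the
  columns are linearly independent, whence rank P = R_r.

  For the count, coprimality of M and N shows that N n + M k = N n' + M k' holds exactly when
  (n', k') = (n + j M, k - j N) for some integer j. Moving along such shifts, every position is
  attained by a unique index pair in the fundamental domain {n < M} \<union> {k > Lt - N} of the grid;
  if M > Ls or N > Lt no two grid points are related at all.
\<close>

lemma (in vec_space) rank_eq_dim_col_if_columns_own_rows:
  assumes A: "A \<in> carrier_mat n nc"
    and own: "\<And>c. c < nc \<Longrightarrow> \<exists>i < n. A $$ (i, c) \<noteq> 0 \<and> (\<forall>c' < nc. c' \<noteq> c \<longrightarrow> A $$ (i, c') = 0)"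
  shows "rank A = nc"
proof -
  have kernel_trivial: "v = 0\<^sub>v nc" if v: "v \<in> carrier_vec nc" "A *\<^sub>v v = 0\<^sub>v n" for v
  proof (rule eq_vecI)
    fix c assume "c < dim_vec (0\<^sub>v nc)"
    then have c: "c < nc" by simp
    obtain i where i: "i < n" "A $$ (i, c) \<noteq> 0" "\<forall>c' < nc. c' \<noteq> c \<longrightarrow> A $$ (i, c') = 0"
      using own[OF c] by blast
    have "(A *\<^sub>v v) $ i = (\<Sum>j = 0..<nc. A $$ (i, j) * v $ j)"
      using i A v(1) by (simp add: scalar_prod_def)
    also have "\<dots> = (\<Sum>j = 0..<nc. if j = c then A $$ (i, c) * v $ c else 0)"
      using i by (intro sum.cong) auto
    also have "\<dots> = A $$ (i, c) * v $ c" using c by simp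
    finally show "v $ c = 0\<^sub>v nc $ c" using v i c by simp
  next
    show "dim_vec v = dim_vec (0\<^sub>v nc)" using v by simp
  qed
  have distinct: "distinct (cols A)"
  proof -
    have "col A c \<noteq> col A c'" if c: "c < nc" "c' < nc" "c \<noteq> c'" for c c'
    proof
      assume cols_eq: "col A c = col A c'"
      obtain i where i: "i < n" "A $$ (i, c) \<noteq> 0" "A $$ (i, c') = 0"
        using own[OF \<open>c < nc\<close>] c by blast
      have "A $$ (i, c) = col A c $ i" using A c i by simp
      also have "\<dots> = A $$ (i, c')" using cols_eq A c i by simp
      finally show False using i by simp
    qed
    then show ?thesis using A by (auto simp: distinct_conv_nth cols_nth)
  qed
  have "lin_indpt (set (cols A))"
  proof
    assume "lin_dep (set (cols A))"
    then obtain v where "v \<in> carrier_vec nc" "v \<noteq> 0\<^sub>v nc" "A *\<^sub>v v = 0\<^sub>v n"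
      using lin_depE[OF A _ distinct] by blast
    then show False using kernel_trivial by blast
  qed
  then show ?thesis by (rule lin_indpt_full_rank[OF A distinct])
qed

lemma positions_eq_image:
  "positions M N Ls Lt = (\<lambda>(n, k). N * n + M * k) ` ({..Ls} \<times> {..Lt})"
  unfolding positions_def by auto

lemma finite_positions: "finite (positions M N Ls Lt)"
  by (simp add: positions_eq_image)

lemma zeta_in_positions: "c < Rr M N Ls Lt \<Longrightarrow> zeta M N Ls Lt c \<in> positions M N Ls Lt"
  unfolding zeta_def Rr_def using finite_positions
  by (metis nth_mem set_sorted_list_of_set length_sorted_list_of_set)

lemma zeta_inject:
  "c < Rr M N Ls Lt \<Longrightarrow> c' < Rr M N Ls Lt \<Longrightarrow> zeta M N Ls Lt c = zeta M N Ls Lt c' \<longleftrightarrow> c = c'"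
  unfolding zeta_def Rr_def using finite_positions
  by (metis distinct_sorted_list_of_set length_sorted_list_of_set nth_eq_iff_index_eq)

lemma index_Pmat:
  "i < (Ls + 1) * (Lt + 1) \<Longrightarrow> c < Rr M N Ls Lt \<Longrightarrow> Pmat M N Ls Lt $$ (i, c) =
     (if zeta M N Ls Lt c = N * (i mod (Ls + 1)) + M * (i div (Ls + 1)) then 1 else 0)"
  by (simp add: Pmat_def)

lemma Pmat_columns_own_rows:
  assumes c: "c < Rr M N Ls Lt"
  shows "\<exists>i < (Ls + 1) * (Lt + 1). Pmat M N Ls Lt $$ (i, c) \<noteq> 0
           \<and> (\<forall>c' < Rr M N Ls Lt. c' \<noteq> c \<longrightarrow> Pmat M N Ls Lt $$ (i, c') = 0)"
proof -
  obtain n k where nk: "n \<le> Ls" "k \<le> Lt" "zeta M N Ls Lt c = N * n + M * k"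
    using zeta_in_positions[OF c] unfolding positions_def by auto
  define i where "i = k * (Ls + 1) + n"
  have i_mod: "i mod (Ls + 1) = n" and i_div: "i div (Ls + 1) = k"
    using nk(1) by (simp_all add: i_def del: mult_Suc_right)
  have i_lt: "i < (Ls + 1) * (Lt + 1)"
  proof -
    have "i \<le> Lt * (Ls + 1) + Ls" unfolding i_def using nk by (intro add_mono mult_le_mono1)
    also have "\<dots> < (Ls + 1) * (Lt + 1)" by (simp add: algebra_simps)
    finally show ?thesis .
  qed
  have "Pmat M N Ls Lt $$ (i, c') = (if c' = c then 1 else 0)" if c': "c' < Rr M N Ls Lt" for c'
  proof -
    have "Pmat M N Ls Lt $$ (i, c') = (if zeta M N Ls Lt c' = N * n + M * k then 1 else 0)"
      using i_lt c' by (simp only: index_Pmat i_mod i_div)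
    then show ?thesis using zeta_inject[OF c' c] nk(3) by simp
  qed
  then show ?thesis using i_lt c by auto
qed

lemma rank_Pmat: "vec_space.rank ((Ls + 1) * (Lt + 1)) (Pmat M N Ls Lt) = Rr M N Ls Lt"
  by (rule vec_space.rank_eq_dim_col_if_columns_own_rows[OF _ Pmat_columns_own_rows])
     (simp add: Pmat_def)

lemma coprime_lincomb_eq_imp_shift:
  fixes M N n k n' k' :: nat
  assumes "M > 0" and "coprime M N" and eq: "N * n + M * k = N * n' + M * k'" and "n' \<le> n"
  obtains j where "n = n' + j * M" and "k' = k + j * N"
proof -
  have "N * n' \<le> N * n" using \<open>n' \<le> n\<close> by simp
  then have "M * k \<le> M * k'" using eq by linarith
  then have "k \<le> k'" using \<open>M > 0\<close> by simp
  then have diff_eq: "N * (n - n') = M * (k' - k)"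
    using eq \<open>n' \<le> n\<close> by (simp add: diff_mult_distrib2)
  then have "M dvd n - n'"
    using \<open>coprime M N\<close> by (metis coprime_dvd_mult_right_iff dvd_triv_left)
  then obtain j where j: "n - n' = j * M" by (metis dvdE mult.commute)
  then have "M * (k' - k) = M * (j * N)" using diff_eq by (simp only: mult_ac)
  then have "k' - k = j * N" using \<open>M > 0\<close> by simp
  then show ?thesis using that j \<open>k \<le> k'\<close> \<open>n' \<le> n\<close> by (metis le_add_diff_inverse)
qed

lemma coprime_lincomb_inj_on:
  fixes M N :: nat
  assumes "M > 0" and "coprime M N"
    and no_shift: "\<And>n k n' k'. (n, k) \<in> S \<Longrightarrow> (n', k') \<in> S \<Longrightarrow> n' + M \<le> n \<Longrightarrow> k + N \<le> k' \<Longrightarrow> False"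
  shows "inj_on (\<lambda>(n, k). N * n + M * k) S"
proof -
  have "n = n' \<and> k = k'"
    if S: "(n, k) \<in> S" "(n', k') \<in> S" and eq: "N * n + M * k = N * n' + M * k'" and "n' \<le> n"
    for n k n' k'
  proof -
    obtain j where j: "n = n' + j * M" "k' = k + j * N"
      using coprime_lincomb_eq_imp_shift[OF assms(1,2) eq \<open>n' \<le> n\<close>] .
    have "j = 0"
    proof (rule ccontr)
      assume "j \<noteq> 0"
      then have "M \<le> j * M" "N \<le> j * N" by simp_all
      then show False using no_shift[OF S] j by linarith
    qed
    then show ?thesis using j by simp
  qed
  then show ?thesis
    by (intro inj_onI) (clarsimp, metis nat_le_linear)
qed

lemma Rr_eq_grid_card_if_no_shift_fits:
  fixes M N :: nat
  assumes "M > 0" and "coprime M N" and "\<not> (M < Ls + 1 \<and> N < Lt + 1)"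
  shows "Rr M N Ls Lt = (Ls + 1) * (Lt + 1)"
proof -
  have "inj_on (\<lambda>(n, k). N * n + M * k) ({..Ls} \<times> {..Lt})"
    using assms by (intro coprime_lincomb_inj_on) auto
  then show ?thesis unfolding Rr_def positions_eq_image by (simp add: card_image card_cartesian_product)
qed

definition fundamental_domain :: "nat \<Rightarrow> nat \<Rightarrow> nat \<Rightarrow> nat \<Rightarrow> (nat \<times> nat) set" where
  "fundamental_domain M N Ls Lt = {..<M} \<times> {..Lt} \<union> {M..Ls} \<times> {Lt + 1 - N..Lt}"

lemma positions_eq_image_fundamental_domain:
  fixes M N :: nat
  assumes "M > 0" and "M < Ls + 1" and "N < Lt + 1"
  shows "positions M N Ls Lt = (\<lambda>(n, k). N * n + M * k) ` fundamental_domain M N Ls Lt"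
proof -
  let ?f = "\<lambda>(n, k). N * n + M * k" and ?D = "fundamental_domain M N Ls Lt"
  have "?f (n, k) \<in> ?f ` ?D" if "n \<le> Ls" "k \<le> Lt" for n k
    using that
  proof (induction n arbitrary: k rule: less_induct)
    case (less n)
    show ?case
    proof (cases "n < M \<or> Lt < k + N")
      case True
      then have "(n, k) \<in> ?D" using less.prems by (auto simp: fundamental_domain_def)
      then show ?thesis by blast
    next
      case False
      then have "?f (n, k) = ?f (n - M, k + N)" by (simp add: algebra_simps)
      moreover have "?f (n - M, k + N) \<in> ?f ` ?D"
        using less False \<open>M > 0\<close> by simp
      ultimately show ?thesis by simp
    qed
  qed
  moreover have "?D \<subseteq> {..Ls} \<times> {..Lt}" using assms by (auto simp: fundamental_domain_def)
  ultimately show ?thesis unfolding positions_eq_image by blast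
qed

lemma card_fundamental_domain:
  assumes "M < Ls + 1" and "N < Lt + 1"
  shows "card (fundamental_domain M N Ls Lt) = N * (Ls + 1) + M * (Lt + 1) - M * N"
proof -
  have "card (fundamental_domain M N Ls Lt) = M * (Lt + 1) + (Ls + 1 - M) * N"
    unfolding fundamental_domain_def using assms
    by (subst card_Un_disjoint) (auto simp: card_cartesian_product)
  also have "\<dots> = N * (Ls + 1) + M * (Lt + 1) - M * N"
  proof -
    have "M * N \<le> (Ls + 1) * N" using assms by (intro mult_le_mono1) simp
    then show ?thesis by (simp only: diff_mult_distrib) (simp add: ac_simps)
  qed
  finally show ?thesis .
qed

lemma Rr_eq_if_shift_fits:
  fixes M N :: nat
  assumes "M > 0" and "coprime M N" and "M < Ls + 1" and "N < Lt + 1"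
  shows "Rr M N Ls Lt = N * (Ls + 1) + M * (Lt + 1) - M * N"
proof -
  have "inj_on (\<lambda>(n, k). N * n + M * k) (fundamental_domain M N Ls Lt)"
    using assms(1,2) by (rule coprime_lincomb_inj_on) (auto simp: fundamental_domain_def)
  then show ?thesis
    unfolding Rr_def positions_eq_image_fundamental_domain[OF assms(1,3,4)]
    using card_fundamental_domain[OF assms(3,4)] by (simp add: card_image)
qed

theorem theorem2:
  fixes M N Ls Lt :: nat
  assumes "M > 0" and "N > 0" and "coprime M N"
  shows "vec_space.rank ((Ls + 1) * (Lt + 1)) (Pmat M N Ls Lt) = Rr M N Ls Lt
       \<and> Rr M N Ls Lt = (if M < Ls + 1 \<and> N < Lt + 1
                          then N * (Ls + 1) + M * (Lt + 1) - M * N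
                          else (Ls + 1) * (Lt + 1))"
  using rank_Pmat Rr_eq_if_shift_fits[OF assms(1,3)]
    Rr_eq_grid_card_if_no_shift_fits[OF assms(1,3)] by auto

end
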